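(* Let $K$ be a field of characteristic zero. Suppose that for all $f,g\in K[X]$ with $\deg(f)=\deg(g)>1$ and all $x_0,y_0\in K$: if infinitely many points of $\mathcal{O}_f(x_0)\times\mathcal{O}_g(y_0)$ lie on the line $Y=X$, then $g^k=f^k$ for some positive integer $k$. Then for all $\alpha,\beta,x_0,y_0\in K$ with $\alpha\neq0$ and all $f,g\in K[X]$ with $\deg(f)=\deg(g)>1$: if infinitely many points of $\mathcal{O}_f(x_0)\times\mathcal{O}_g(y_0)$ lie on the line $Y=\alpha X+\beta$, then $g^k(\alpha X+\beta)=\alpha f^k(X)+\beta$ for some positive integer $k$.
   Context: $\mathcal{O}_f(x_0)=\{x_0,f(x_0),f(f(x_0)),\dots\}$ is the orbit of $x_0$ under $f$; $f^k$ denotes the $k$-th iterate of $f$ under composition. *)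

theory Defs
  imports "HOL-Computational_Algebra.Polynomial"
begin

definition poly_iter :: "'a::comm_semiring_1 poly \<Rightarrow> nat \<Rightarrow> 'a poly" where
  "poly_iter f k = ((\<lambda>p. pcompose f p) ^^ k) [:0, 1:]"

definition orbit :: "'a::comm_semiring_1 poly \<Rightarrow> 'a \<Rightarrow> 'a set" where
  "orbit f x0 = {((\<lambda>x. poly f x) ^^ n) x0 | n. True}"

end

theory Submission
  imports Defs
begin

text \<open>Conjugating g by the affine map L x = \<alpha> x + \<beta> gives a polynomial h with
  L \<circ> h = g \<circ> L. Then L maps the orbits of h onto those of g, so the points of
  \<open>O\<^sub>f(x\<^sub>0) \<times> O\<^sub>g(y\<^sub>0)\<close> on the line Y = L X are the images of the points of
  \<open>O\<^sub>f(x\<^sub>0) \<times> O\<^sub>h(L\<^sup>-\<^sup>1 y\<^sub>0)\<close> on the diagonal. The hypothesis yields \<open>h\<^sup>k = f\<^sup>k\<close>, and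
  \<open>L \<circ> h\<^sup>k = g\<^sup>k \<circ> L\<close> turns this into the claim.\<close>

lemma poly_poly_iter: "poly (poly_iter f k) x = (poly f ^^ k) x"
  by (induction k arbitrary: x) (simp_all add: poly_iter_def poly_pcompose)

lemma funpow_semiconj:
  assumes "\<And>x. \<phi> (f x) = g (\<phi> x)"
  shows "\<phi> ((f ^^ n) x) = (g ^^ n) (\<phi> x)"
  by (induction n) (simp_all add: assms)

lemma orbit_semiconj:
  assumes "\<And>x. \<phi> (poly h x) = poly g (\<phi> x)"
  shows "orbit g (\<phi> x0) = \<phi> ` orbit h x0"
  using funpow_semiconj[of \<phi> "poly h" "poly g", OF assms]
  by (auto simp: orbit_def image_iff) metis

definition affine_conj :: "'a::field poly \<Rightarrow> 'a \<Rightarrow> 'a \<Rightarrow> 'a poly" where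
  "affine_conj g \<alpha> \<beta> = pcompose [:- \<beta> / \<alpha>, 1 / \<alpha>:] (pcompose g [:\<beta>, \<alpha>:])"

lemma poly_affine_conj:
  assumes "\<alpha> \<noteq> 0"
  shows "\<alpha> * poly (affine_conj g \<alpha> \<beta>) x + \<beta> = poly g (\<alpha> * x + \<beta>)"
  using assms by (simp add: affine_conj_def poly_pcompose field_simps)

lemma degree_affine_conj:
  assumes "\<alpha> \<noteq> 0"
  shows "degree (affine_conj g \<alpha> \<beta>) = degree g"
  using assms by (simp add: affine_conj_def degree_pcompose)

lemma poly_iter_affine_conj:
  fixes g :: "'a::field_char_0 poly"
  assumes "\<alpha> \<noteq> 0"
  shows "pcompose (poly_iter g k) [:\<beta>, \<alpha>:]
           = smult \<alpha> (poly_iter (affine_conj g \<alpha> \<beta>) k) + [:\<beta>:]"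
proof -
  have "\<alpha> * poly (poly_iter (affine_conj g \<alpha> \<beta>) k) x + \<beta> = poly (poly_iter g k) (\<alpha> * x + \<beta>)" for x
    using funpow_semiconj[of "\<lambda>x. \<alpha> * x + \<beta>" "poly (affine_conj g \<alpha> \<beta>)" "poly g",
          OF poly_affine_conj[OF assms]]
    by (simp add: poly_poly_iter)
  then show ?thesis
    by (simp add: poly_eq_poly_eq_iff[symmetric] fun_eq_iff poly_pcompose algebra_simps)
qed

lemma orbit_pairs_on_line:
  fixes g :: "'a::field poly"
  assumes "\<alpha> \<noteq> 0"
  shows "{(x, y). x \<in> orbit f x0 \<and> y \<in> orbit g y0 \<and> y = \<alpha> * x + \<beta>}
         = (\<lambda>(x, y). (x, \<alpha> * y + \<beta>)) `
             {(x, y). x \<in> orbit f x0 \<and> y \<in> orbit (affine_conj g \<alpha> \<beta>) ((y0 - \<beta>) / \<alpha>) \<and> y = x}"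
proof -
  have "\<alpha> * ((y0 - \<beta>) / \<alpha>) + \<beta> = y0"
    using assms by simp
  then have "orbit g y0 = (\<lambda>x. \<alpha> * x + \<beta>) ` orbit (affine_conj g \<alpha> \<beta>) ((y0 - \<beta>) / \<alpha>)"
    using orbit_semiconj[of "\<lambda>x. \<alpha> * x + \<beta>" "affine_conj g \<alpha> \<beta>" g,
          OF poly_affine_conj[OF assms]] by metis
  then show ?thesis
    using assms by (auto simp: image_iff)
qed

theorem lemma5p2:
  assumes diag: "\<forall>(f::'a::field_char_0 poly) g x0 y0.
      degree f = degree g \<and> degree f > 1 \<and>
      infinite {(x, y). x \<in> orbit f x0 \<and> y \<in> orbit g y0 \<and> y = x}
      \<longrightarrow> (\<exists>k>0. poly_iter g k = poly_iter f k)"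
  shows "\<forall>(\<alpha>::'a) \<beta> x0 y0 (f::'a poly) g.
      \<alpha> \<noteq> 0 \<and> degree f = degree g \<and> degree f > 1 \<and>
      infinite {(x, y). x \<in> orbit f x0 \<and> y \<in> orbit g y0 \<and> y = \<alpha> * x + \<beta>}
      \<longrightarrow> (\<exists>k>0. pcompose (poly_iter g k) [:\<beta>, \<alpha>:]
                     = smult \<alpha> (poly_iter f k) + [:\<beta>:])"
proof (intro allI impI, elim conjE)
  fix \<alpha> \<beta> x0 y0 and f g :: "'a poly"
  assume "\<alpha> \<noteq> 0" "degree f = degree g" "degree f > 1"
    and "infinite {(x, y). x \<in> orbit f x0 \<and> y \<in> orbit g y0 \<and> y = \<alpha> * x + \<beta>}"
  then have "infinite {(x, y). x \<in> orbit f x0 \<and>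
               y \<in> orbit (affine_conj g \<alpha> \<beta>) ((y0 - \<beta>) / \<alpha>) \<and> y = x}"
    unfolding orbit_pairs_on_line[OF \<open>\<alpha> \<noteq> 0\<close>] using finite_imageI by blast
  then obtain k where "k > 0" "poly_iter (affine_conj g \<alpha> \<beta>) k = poly_iter f k"
    using diag[rule_format, of f "affine_conj g \<alpha> \<beta>"] \<open>\<alpha> \<noteq> 0\<close>
      \<open>degree f = degree g\<close> \<open>degree f > 1\<close>
    by (auto simp: degree_affine_conj)
  then show "\<exists>k>0. pcompose (poly_iter g k) [:\<beta>, \<alpha>:] = smult \<alpha> (poly_iter f k) + [:\<beta>:]"
    using poly_iter_affine_conj[OF \<open>\<alpha> \<noteq> 0\<close>, where g=g and k=k and \<beta>=\<beta>] by auto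
qed

end
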